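(* The set $P=\bigsqcup_{n\ge1}P_n$, equipped with the operations $\dashv,\vdash,\perp$ described in the context, is an associative trioid, and it is the free associative trioid on the one generator $\{0\}\in P_1$. Precisely, let $\mathcal T$ be the free associative trioid on one generator $x$. Then the unique trioid morphism $\phi:\mathcal T\to P$ with $\phi(x)=\{0\}$ is a bijection, and it maps the elements of $\mathcal T$ that are products of $n$ copies of $x$ onto $P_n$.
   Context: An associative trioid is a set $X$ equipped with three binary operations $\dashv,\vdash,\perp:X\times X\to X$ satisfying for all $x,y,z\in X$ the following 11 relations: (1) $(x\dashv y)\dashv z=x\dashv(y\dashv z)$; (2) $(x\dashv y)\dashv z=x\dashv(y\vdash z)$; (3) $(x\vdash y)\dashv z=x\vdash(y\dashv z)$; (4) $(x\dashv y)\vdash z=x\vdash(y\vdash z)$; (5) $(x\vdash y)\vdash z=x\vdash(y\vdash z)$; (6) $(x\dashv y)\dashv z=x\dashv(y\perp z)$; (7) $(x\perp y)\dashv z=x\perp(y\dashv z)$; (8) $(x\dashv y)\perp z=x\perp(y\vdash z)$; (9) $(x\vdash y)\perp z=x\vdash(y\perp z)$; (10) $(x\perp y)\vdash z=x\vdash(y\vdash z)$; (11) $(x\perp y)\perp z=x\perp(y\perp z)$. A morphism of trioids is a map preserving all three operations. For $n\ge1$ let $[n-1]=\{0,\dots,n-1\}$ and let $P_n$ be the set of nonempty subsets of $[n-1]$. For $p,q\ge1$ let $\mathrm{bij}:[p-1]\sqcup[q-1]\to[p+q-1]$ be the identity on the first copy and $k\mapsto p+k$ on the second copy. For $X\in P_p$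 and $Y\in P_q$ set, in $P_{p+q}$: - $X\dashv Y=\mathrm{bij}(X)$ (with $X$ in the first copy); - $X\vdash Y=\mathrm{bij}(Y)$ (with $Y$ in the second copy); - $X\perp Y=\mathrm{bij}(X\sqcup Y)$. *)

theory Defs
  imports Main
begin

definition is_trioid ::
  "'a set \<Rightarrow> ('a \<Rightarrow> 'a \<Rightarrow> 'a) \<Rightarrow> ('a \<Rightarrow> 'a \<Rightarrow> 'a) \<Rightarrow> ('a \<Rightarrow> 'a \<Rightarrow> 'a) \<Rightarrow> bool" where
  "is_trioid A l r m \<longleftrightarrow>
     (\<forall>x\<in>A. \<forall>y\<in>A. l x y \<in> A \<and> r x y \<in> A \<and> m x y \<in> A) \<and>
     (\<forall>x\<in>A. \<forall>y\<in>A. \<forall>z\<in>A.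
        l (l x y) z = l x (l y z) \<and>
        l (l x y) z = l x (r y z) \<and>
        l (r x y) z = r x (l y z) \<and>
        r (l x y) z = r x (r y z) \<and>
        r (r x y) z = r x (r y z) \<and>
        l (l x y) z = l x (m y z) \<and>
        l (m x y) z = m x (l y z) \<and>
        m (l x y) z = m x (r y z) \<and>
        m (r x y) z = r x (m y z) \<and>
        r (m x y) z = r x (r y z) \<and>
        m (m x y) z = m x (m y z))"

text \<open>Terms built from the generator x with the three operations
  (TL = dashv, TR = vdash, TM = perp).\<close>
datatype tterm = Gen | TL tterm tterm | TR tterm tterm | TM tterm tterm

fun tlen :: "tterm \<Rightarrow> nat" where
  "tlen Gen = 1"
| "tlen (TL s t) = tlen s + tlen t"
| "tlen (TR s t) = tlen s + tlen t"
| "tlen (TM s t) = tlen s + tlen t"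

text \<open>The congruence generated by the 11 trioid relations; the free trioid
  on one generator is the quotient of tterm by tcong.\<close>
inductive tcong :: "tterm \<Rightarrow> tterm \<Rightarrow> bool" where
  refl: "tcong t t"
| sym: "tcong s t \<Longrightarrow> tcong t s"
| trans: "tcong s t \<Longrightarrow> tcong t u \<Longrightarrow> tcong s u"
| congL: "tcong s s' \<Longrightarrow> tcong t t' \<Longrightarrow> tcong (TL s t) (TL s' t')"
| congR: "tcong s s' \<Longrightarrow> tcong t t' \<Longrightarrow> tcong (TR s t) (TR s' t')"
| congM: "tcong s s' \<Longrightarrow> tcong t t' \<Longrightarrow> tcong (TM s t) (TM s' t')"
| ax1: "tcong (TL (TL x y) z) (TL x (TL y z))"
| ax2: "tcong (TL (TL x y) z) (TL x (TR y z))"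
| ax3: "tcong (TL (TR x y) z) (TR x (TL y z))"
| ax4: "tcong (TR (TL x y) z) (TR x (TR y z))"
| ax5: "tcong (TR (TR x y) z) (TR x (TR y z))"
| ax6: "tcong (TL (TL x y) z) (TL x (TM y z))"
| ax7: "tcong (TL (TM x y) z) (TM x (TL y z))"
| ax8: "tcong (TM (TL x y) z) (TM x (TR y z))"
| ax9: "tcong (TM (TR x y) z) (TR x (TM y z))"
| ax10: "tcong (TR (TM x y) z) (TR x (TR y z))"
| ax11: "tcong (TM (TM x y) z) (TM x (TM y z))"

text \<open>An element of P_n is encoded as the pair (n, S) with S a nonempty subset
  of {0..<n} = [n-1].\<close>
definition Pn :: "nat \<Rightarrow> (nat \<times> nat set) set" where
  "Pn n = {(n, S) | S. S \<noteq> {} \<and> S \<subseteq> {0..<n}}"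

definition Pset :: "(nat \<times> nat set) set" where
  "Pset = (\<Union>n\<in>{1..}. Pn n)"

definition pL :: "nat \<times> nat set \<Rightarrow> nat \<times> nat set \<Rightarrow> nat \<times> nat set" where
  "pL a b = (fst a + fst b, snd a)"

definition pR :: "nat \<times> nat set \<Rightarrow> nat \<times> nat set \<Rightarrow> nat \<times> nat set" where
  "pR a b = (fst a + fst b, (\<lambda>k. fst a + k) ` snd b)"

definition pM :: "nat \<times> nat set \<Rightarrow> nat \<times> nat set \<Rightarrow> nat \<times> nat set" where
  "pM a b = (fst a + fst b, snd a \<union> (\<lambda>k. fst a + k) ` snd b)"

fun peval :: "tterm \<Rightarrow> nat \<times> nat set" where
  "peval Gen = (1, {0})"
| "peval (TL s t) = pL (peval s) (peval t)"
| "peval (TR s t) = pR (peval s) (peval t)"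
| "peval (TM s t) = pM (peval s) (peval t)"

end

theory Submission
  imports Defs
begin

text \<open>Read left to right, the trioid relations move every product into a right comb
  \<open>x c\<^sub>1 (x c\<^sub>2 (\<dots> (x c\<^sub>m x)))\<close>, i.e. a word \<open>c\<^sub>1 \<dots> c\<^sub>m\<close> over the three
  operations.  Modulo the relations \<open>u \<stileturn> v\<close> depends on \<open>v\<close> only through its length, so every
  letter after the first \<open>\<stileturn>\<close> may be replaced by \<open>\<stileturn>\<close>.  The resulting word is determined by the
  image \<open>(m + 1, S)\<close> of the comb in \<open>P\<close>: its letters before position \<open>max S\<close> are \<open>\<perp>\<close> or
  \<open>\<turnstile>\<close> according to membership in \<open>S\<close>, the remaining ones are \<open>\<stileturn>\<close>.  Conversely \<open>P\<close>
  satisfies the trioid identities, so \<open>\<phi>\<close> is constant on congruence classes, and every \<open>(n, S)\<close>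
  is the image of its normal form.\<close>

lemma P_trioid_identities:
  fixes a b c :: "nat \<times> nat set"
  shows
    "pL (pL a b) c = pL a (pL b c)"
    "pL (pL a b) c = pL a (pR b c)"
    "pL (pR a b) c = pR a (pL b c)"
    "pR (pL a b) c = pR a (pR b c)"
    "pR (pR a b) c = pR a (pR b c)"
    "pL (pL a b) c = pL a (pM b c)"
    "pL (pM a b) c = pM a (pL b c)"
    "pM (pL a b) c = pM a (pR b c)"
    "pM (pR a b) c = pR a (pM b c)"
    "pR (pM a b) c = pR a (pR b c)"
    "pM (pM a b) c = pM a (pM b c)"
  by (auto simp: pL_def pR_def pM_def image_Un image_image add.assoc)

lemma is_trioid_P: "is_trioid Pset pL pR pM"
  unfolding is_trioid_def
  by (auto simp: P_trioid_identities Pset_def Pn_def pL_def pR_def pM_def)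

lemma peval_tcong: "tcong s t \<Longrightarrow> peval s = peval t"
  by (induction rule: tcong.induct) (auto intro: P_trioid_identities)

lemma peval_in_Pn: "peval t \<in> Pn (tlen t)"
  by (induction t) (auto simp: Pn_def pL_def pR_def pM_def)

lemma tlen_ge_1: "tlen t \<ge> 1"
  by (induction t) auto

declare tcong.trans [trans]

datatype op3 = OpL | OpR | OpM

fun tmul :: "op3 \<Rightarrow> tterm \<Rightarrow> tterm \<Rightarrow> tterm" where
  "tmul OpL = TL"
| "tmul OpR = TR"
| "tmul OpM = TM"

lemma tcong_tmul: "tcong s s' \<Longrightarrow> tcong t t' \<Longrightarrow> tcong (tmul c s t) (tmul c s' t')"
  by (cases c) (auto intro: tcong.intros)

fun comb :: "op3 list \<Rightarrow> tterm" where
  "comb [] = Gen"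
| "comb (c # w) = tmul c Gen (comb w)"

text \<open>\<open>reassoc c d = (c', d')\<close> records the relation
  \<open>(x d y) c z = x c' (y d' z)\<close>; there is one for every pair \<open>c, d\<close>.\<close>
fun reassoc :: "op3 \<Rightarrow> op3 \<Rightarrow> op3 \<times> op3" where
  "reassoc OpL d = (d, OpL)"
| "reassoc OpR d = (OpR, OpR)"
| "reassoc OpM OpL = (OpM, OpR)"
| "reassoc OpM OpR = (OpR, OpM)"
| "reassoc OpM OpM = (OpM, OpM)"

lemma tcong_reassoc:
  "tcong (tmul c (tmul d x y) z)
     (tmul (fst (reassoc c d)) x (tmul (snd (reassoc c d)) y z))"
  by (cases c; cases d) (auto intro: tcong.intros)

fun word_mul :: "op3 \<Rightarrow> op3 list \<Rightarrow> op3 list \<Rightarrow> op3 list" where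
  "word_mul c [] v = c # v"
| "word_mul c (d # u) v = fst (reassoc c d) # word_mul (snd (reassoc c d)) u v"

lemma tcong_comb_word_mul: "tcong (tmul c (comb u) (comb v)) (comb (word_mul c u v))"
proof (induction u arbitrary: c)
  case Nil
  show ?case by (simp add: tcong.refl)
next
  case (Cons d u)
  let ?c' = "fst (reassoc c d)" and ?d' = "snd (reassoc c d)"
  have "tcong (tmul c (comb (d # u)) (comb v)) (tmul ?c' Gen (tmul ?d' (comb u) (comb v)))"
    using tcong_reassoc by simp
  also have "tcong \<dots> (tmul ?c' Gen (comb (word_mul ?d' u v)))"
    by (rule tcong_tmul[OF tcong.refl Cons.IH])
  finally show ?case
    by simp
qed

fun word_of_term :: "tterm \<Rightarrow> op3 list" where
  "word_of_term Gen = []"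
| "word_of_term (TL s t) = word_mul OpL (word_of_term s) (word_of_term t)"
| "word_of_term (TR s t) = word_mul OpR (word_of_term s) (word_of_term t)"
| "word_of_term (TM s t) = word_mul OpM (word_of_term s) (word_of_term t)"

lemma tcong_comb_word_of_term: "tcong t (comb (word_of_term t))"
proof (induction t)
  case Gen
  show ?case by (simp add: tcong.refl)
next
  case (TL s t)
  show ?case
    using tcong.trans[OF tcong_tmul[OF TL] tcong_comb_word_mul, of OpL] by simp
next
  case (TR s t)
  show ?case
    using tcong.trans[OF tcong_tmul[OF TR] tcong_comb_word_mul, of OpR] by simp
next
  case (TM s t)
  show ?case
    using tcong.trans[OF tcong_tmul[OF TM] tcong_comb_word_mul, of OpM] by simp
qed

lemma tcong_TL_comb_replicate:
  "tcong (TL x (comb w)) (TL x (comb (replicate (length w) OpL)))"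
proof (induction w arbitrary: x)
  case Nil
  show ?case by (simp add: tcong.refl)
next
  case (Cons c w)
  have "tcong (TL x (comb (c # w))) (TL (TL x Gen) (comb w))"
    by (cases c) (auto intro: tcong.intros)
  also have "tcong \<dots> (TL (TL x Gen) (comb (replicate (length w) OpL)))"
    by (rule Cons.IH)
  also have "tcong \<dots> (TL x (comb (replicate (length (c # w)) OpL)))"
    by (simp add: tcong.ax1)
  finally show ?case .
qed

fun sem :: "op3 list \<Rightarrow> nat set" where
  "sem [] = {0}"
| "sem (OpL # w) = {0}"
| "sem (OpR # w) = Suc ` sem w"
| "sem (OpM # w) = insert 0 (Suc ` sem w)"

lemma sem_nonempty: "sem w \<noteq> {}"
  by (induction w rule: sem.induct) auto

lemma peval_comb: "peval (comb w) = (Suc (length w), sem w)"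
proof (induction w)
  case Nil
  show ?case by simp
next
  case (Cons c w)
  then show ?case
    by (cases c) (auto simp: pL_def pR_def pM_def image_iff)
qed

text \<open>For \<open>S\<close> nonempty, \<open>normal_word m S\<close> has letter \<open>OpM\<close> at \<open>i \<in> S\<close> and \<open>OpR\<close> at \<open>i \<notin> S\<close>
  for \<open>i < Max S\<close>, and \<open>OpL\<close> from position \<open>Max S\<close> on.\<close>
fun normal_word :: "nat \<Rightarrow> nat set \<Rightarrow> op3 list" where
  "normal_word 0 S = []"
| "normal_word (Suc m) S =
     (if S \<subseteq> {0} then replicate (Suc m) OpL
      else (if 0 \<in> S then OpM else OpR) # normal_word m {k. Suc k \<in> S})"

lemma length_normal_word: "length (normal_word m S) = m"
  by (induction m arbitrary: S) auto

lemma sem_normal_word: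
  assumes "S \<noteq> {}" and "S \<subseteq> {0..<Suc m}"
  shows "sem (normal_word m S) = S"
  using assms
proof (induction m arbitrary: S)
  case 0
  then show ?case by auto
next
  case (Suc m)
  define S' where "S' = {k. Suc k \<in> S}"
  show ?case
  proof (cases "S \<subseteq> {0}")
    case True
    then show ?thesis using Suc.prems by auto
  next
    case False
    then have "S' \<noteq> {}"
      by (auto simp: S'_def) (metis not0_implies_Suc)
    moreover have "S' \<subseteq> {0..<Suc m}"
      using Suc.prems(2) by (auto simp: S'_def)
    ultimately have "sem (normal_word m S') = S'"
      by (rule Suc.IH)
    moreover have "S = Suc ` S' \<union> (S \<inter> {0})"
      by (auto simp: S'_def image_iff) (metis not0_implies_Suc)
    ultimately show ?thesis
      using False by (auto simp: S'_def)
  qed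
qed

lemma tcong_comb_normal_word: "tcong (comb w) (comb (normal_word (length w) (sem w)))"
proof (induction w)
  case Nil
  show ?case by (simp add: tcong.refl)
next
  case (Cons c w)
  have sem_shift: "{k. Suc k \<in> sem (c # w)} = sem w" if "c \<noteq> OpL"
    using that by (cases c) auto
  have sem_not_subset_0: "\<not> sem (c # w) \<subseteq> {0}" if "c \<noteq> OpL"
    using that sem_nonempty[of w] by (cases c) auto
  show ?case
  proof (cases c)
    case OpL
    then show ?thesis
      using tcong_TL_comb_replicate[of Gen w] by simp
  next
    case OpR
    then show ?thesis
      using sem_shift sem_not_subset_0 Cons.IH by (auto intro: tcong.intros)
  next
    case OpM
    then show ?thesis
      using sem_shift sem_not_subset_0 Cons.IH by (auto intro: tcong.intros)
  qed
qed

definition normal_term :: "nat \<times> nat set \<Rightarrow> tterm" where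
  "normal_term p = comb (normal_word (fst p - 1) (snd p))"

lemma tcong_normal_term_peval: "tcong t (normal_term (peval t))"
proof -
  let ?w = "word_of_term t"
  have "peval t = (Suc (length ?w), sem ?w)"
    using peval_tcong[OF tcong_comb_word_of_term] peval_comb by simp
  then have "normal_term (peval t) = comb (normal_word (length ?w) (sem ?w))"
    by (simp add: normal_term_def)
  then show ?thesis
    using tcong.trans[OF tcong_comb_word_of_term tcong_comb_normal_word] by simp
qed

lemma peval_eq_imp_tcong:
  assumes "peval s = peval t"
  shows "tcong s t"
proof -
  have "tcong (normal_term (peval s)) t"
    using assms tcong.sym[OF tcong_normal_term_peval[of t]] by simp
  then show ?thesis
    by (rule tcong.trans[OF tcong_normal_term_peval])
qed

lemma peval_normal_term: "p \<in> Pn n \<Longrightarrow> peval (normal_term p) = p"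
proof -
  assume "p \<in> Pn n"
  then obtain S where p: "p = (n, S)" and S: "S \<noteq> {}" "S \<subseteq> {0..<n}"
    by (auto simp: Pn_def)
  then have n: "n = Suc (n - 1)"
    by (cases n) auto
  then have "sem (normal_word (n - 1) S) = S"
    using sem_normal_word[OF S(1)] S(2) by simp
  then show ?thesis
    using p n by (auto simp: normal_term_def peval_comb length_normal_word)
qed

lemma image_peval_tlen: "peval ` {t. tlen t = n} = Pn n"
proof
  show "peval ` {t. tlen t = n} \<subseteq> Pn n"
    using peval_in_Pn by blast
  show "Pn n \<subseteq> peval ` {t. tlen t = n}"
  proof
    fix p assume p: "p \<in> Pn n"
    have "p \<in> Pn (tlen (normal_term p))"
      using peval_in_Pn[of "normal_term p"] peval_normal_term[OF p] by simp
    with p have "tlen (normal_term p) = n"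
      by (auto simp: Pn_def)
    then show "p \<in> peval ` {t. tlen t = n}"
      using peval_normal_term[OF p] by force
  qed
qed

lemma range_peval: "range peval = Pset"
proof -
  have "UNIV = (\<Union>n\<in>{1..}. {t. tlen t = n})"
    using tlen_ge_1 by blast
  then have "range peval = (\<Union>n\<in>{1..}. peval ` {t. tlen t = n})"
    by (metis image_UN)
  then show ?thesis
    by (simp add: image_peval_tlen Pset_def)
qed

theorem proposition1p9:
  shows "is_trioid Pset pL pR pM
    \<and> (\<forall>s t. tcong s t \<longrightarrow> peval s = peval t)
    \<and> (\<forall>s t. peval s = peval t \<longrightarrow> tcong s t)
    \<and> peval ` UNIV = Pset
    \<and> (\<forall>n\<ge>1. peval ` {t. tlen t = n} = Pn n)"
  using is_trioid_P peval_tcong peval_eq_imp_tcong range_peval image_peval_tlen by blast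

end
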